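(* Let $\mathcal{Z}$ and $\mathcal{X}$ be two mutually unbiased orthonormal bases of $\mathbb{C}^2$. Assume the CQC conjecture holds for these bases, i.e. for every two-qubit state $\sigma_{AB}$ on $\mathbb{C}^2\otimes\mathbb{C}^2$ one has $I(Z^A:Z^B)+I(X^A:X^B)\le I(A:B)$. Then every two-qubit state $\rho_{AB}$ satisfies $$H(Z^AZ^B)+H(X^AX^B)\ \ge\ 2+H(AB).$$
   Context: All logarithms are base 2 and $0\log 0=0$. Two orthonormal bases $\{|z_i\rangle\}$, $\{|x_j\rangle\}$ of $\mathbb{C}^d$ are mutually unbiased if $|\langle z_i|x_j\rangle|^2=1/d$ for all $i,j$. $H(AB)$ is the von Neumann entropy of $\rho_{AB}$, $H(A),H(B)$ those of its marginals, and $I(A:B)=H(A)+H(B)-H(AB)$. For a basis $\mathcal{M}=\{|m_j\rangle\}$, $M^A$ and $M^B$ denote the classical random variables obtained when both parties measure their subsystem in $\mathcal{M}$, with joint distribution $p(j,k)=\langle m_j\otimes m_k|\rho_{AB}|m_j\otimes m_k\rangle$; $H(M^AM^B)$ is the Shannon entropy of this joint distribution and $I(M^A:M^B)=H(M^A)+H(M^B)-H(M^AM^B)$ the classical mutual information. *)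

theory Defs
  imports "Jordan_Normal_Form.Char_Poly"
begin

text \<open>Conventions: matrices are Jordan_Normal_Form complex matrices. A two-qubit
  operator is a 4x4 matrix w.r.t. the product basis, index of |j> (x) |k> is 2*j+k.\<close>

definition xlogx :: "real \<Rightarrow> real" where
  "xlogx p = (if p = 0 then 0 else p * log 2 p)"

definition cinner :: "complex vec \<Rightarrow> complex vec \<Rightarrow> complex" where
  "cinner u v = (\<Sum>i<dim_vec u. cnj (u $ i) * v $ i)"

definition hermitian :: "complex mat \<Rightarrow> bool" where
  "hermitian A \<longleftrightarrow> (\<forall>i<dim_row A. \<forall>j<dim_row A. A $$ (i, j) = cnj (A $$ (j, i)))"

definition positive_semidef :: "complex mat \<Rightarrow> bool" where
  "positive_semidef A \<longleftrightarrow> (\<forall>v\<in>carrier_vec (dim_row A). 0 \<le> Re (cinner v (A *\<^sub>v v)))"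

definition density_matrix :: "nat \<Rightarrow> complex mat \<Rightarrow> bool" where
  "density_matrix d A \<longleftrightarrow> A \<in> carrier_mat d d \<and> hermitian A \<and> positive_semidef A
      \<and> (\<Sum>i<d. A $$ (i, i)) = 1"

definition two_qubit_state :: "complex mat \<Rightarrow> bool" where
  "two_qubit_state \<rho> \<longleftrightarrow> density_matrix 4 \<rho>"

text \<open>Von Neumann entropy (base 2): -sum lambda log lambda over the eigenvalues
  (with multiplicity, i.e. the roots of the characteristic polynomial).\<close>
definition vn_entropy :: "complex mat \<Rightarrow> real" where
  "vn_entropy A = (let es = (SOME es. char_poly A = (\<Prod>a\<leftarrow>es. [:- a, 1:]) \<and> length es = dim_row A)
                   in - (\<Sum>e\<leftarrow>es. xlogx (Re e)))"

definition ptrace_B :: "complex mat \<Rightarrow> complex mat" where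
  "ptrace_B \<rho> = mat 2 2 (\<lambda>(i, j). \<Sum>k<2. \<rho> $$ (2*i + k, 2*j + k))"

definition ptrace_A :: "complex mat \<Rightarrow> complex mat" where
  "ptrace_A \<rho> = mat 2 2 (\<lambda>(i, j). \<Sum>k<2. \<rho> $$ (2*k + i, 2*k + j))"

definition qmutual_info :: "complex mat \<Rightarrow> real" where
  "qmutual_info \<rho> = vn_entropy (ptrace_B \<rho>) + vn_entropy (ptrace_A \<rho>) - vn_entropy \<rho>"

definition orthonormal_basis2 :: "(nat \<Rightarrow> complex vec) \<Rightarrow> bool" where
  "orthonormal_basis2 b \<longleftrightarrow> (\<forall>i<2. b i \<in> carrier_vec 2) \<and>
      (\<forall>i<2. \<forall>j<2. cinner (b i) (b j) = (if i = j then 1 else 0))"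

definition mutually_unbiased2 :: "(nat \<Rightarrow> complex vec) \<Rightarrow> (nat \<Rightarrow> complex vec) \<Rightarrow> bool" where
  "mutually_unbiased2 z x \<longleftrightarrow> (\<forall>i<2. \<forall>j<2. (cmod (cinner (z i) (x j)))\<^sup>2 = 1 / 2)"

definition kron_vec :: "complex vec \<Rightarrow> complex vec \<Rightarrow> complex vec" where
  "kron_vec u v = vec (dim_vec u * dim_vec v) (\<lambda>i. u $ (i div dim_vec v) * v $ (i mod dim_vec v))"

definition meas_prob :: "(nat \<Rightarrow> complex vec) \<Rightarrow> complex mat \<Rightarrow> nat \<Rightarrow> nat \<Rightarrow> real" where
  "meas_prob m \<rho> j k = Re (cinner (kron_vec (m j) (m k)) (\<rho> *\<^sub>v kron_vec (m j) (m k)))"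

definition joint_shannon :: "(nat \<Rightarrow> complex vec) \<Rightarrow> complex mat \<Rightarrow> real" where
  "joint_shannon m \<rho> = - (\<Sum>j<2. \<Sum>k<2. xlogx (meas_prob m \<rho> j k))"

definition shannon_A :: "(nat \<Rightarrow> complex vec) \<Rightarrow> complex mat \<Rightarrow> real" where
  "shannon_A m \<rho> = - (\<Sum>j<2. xlogx (\<Sum>k<2. meas_prob m \<rho> j k))"

definition shannon_B :: "(nat \<Rightarrow> complex vec) \<Rightarrow> complex mat \<Rightarrow> real" where
  "shannon_B m \<rho> = - (\<Sum>k<2. xlogx (\<Sum>j<2. meas_prob m \<rho> j k))"

definition cmutual_info :: "(nat \<Rightarrow> complex vec) \<Rightarrow> complex mat \<Rightarrow> real" where
  "cmutual_info m \<rho> = shannon_A m \<rho> + shannon_B m \<rho> - joint_shannon m \<rho>"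

end

theory Submission
  imports Defs "HOL-Analysis.Euclidean_Space" "HOL-Real_Asymp.Real_Asymp"
begin

text \<open>Writing out the mutual informations, the CQC inequality for \<open>\<rho>\<close> says
  \<open>H(Z\<^sup>AZ\<^sup>B) + H(X\<^sup>AX\<^sup>B) - H(AB) \<ge> [H(Z\<^sup>A) + H(X\<^sup>A) - H(A)] + [H(Z\<^sup>B) + H(X\<^sup>B) - H(B)]\<close>,
  so it suffices that each bracket is at least 1. This is the single-qubit entropic uncertainty
  relation \<open>H(Z) + H(X) \<ge> 1 + H(\<sigma>)\<close>, applied to the marginals. In the Bloch picture \<open>\<sigma>\<close> has
  a Bloch vector \<open>r\<close> with \<open>|r| \<le> 1\<close> and eigenvalues \<open>(1 \<plusminus> |r|)/2\<close>, a basis with Bloch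
  vector \<open>n\<close> gives outcome probabilities \<open>(1 \<plusminus> r\<cdot>n)/2\<close>, and mutually unbiased bases have
  orthogonal Bloch vectors \<open>n, m\<close>, so \<open>(r\<cdot>n)\<^sup>2 + (r\<cdot>m)\<^sup>2 \<le> |r|\<^sup>2\<close>. Writing the binary entropy
  of bias \<open>t\<close> as \<open>1 - \<phi>(t)/(2 ln 2)\<close> with \<open>\<phi>(t) = (1+t) ln(1+t) + (1-t) ln(1-t)\<close>, the relation
  becomes \<open>\<phi>(a) + \<phi>(b) \<le> \<phi>(R)\<close> whenever \<open>a\<^sup>2 + b\<^sup>2 \<le> R\<^sup>2 \<le> 1\<close>; this superadditivity of
  \<open>\<phi>(\<surd>s)\<close> holds because \<open>\<phi>'(t)/t = 2 artanh(t)/t\<close> is increasing.\<close>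

section \<open>Binary entropy as a function of the bias\<close>

definition negentropy :: "real \<Rightarrow> real" where
  "negentropy t = (1 + t) * ln (1 + t) + (1 - t) * ln (1 - t)"

lemma x_minus_1_le_x_ln_x:
  fixes x :: real
  assumes "0 \<le> x"
  shows "x - 1 \<le> x * ln x"
proof (cases "x = 0")
  case False
  with assms have "ln (1 / x) \<le> 1 / x - 1"
    by (intro ln_le_minus_one) simp
  with False assms show ?thesis
    by (simp add: ln_div field_simps)
qed simp

lemma negentropy_nonneg: "\<bar>t\<bar> \<le> 1 \<Longrightarrow> 0 \<le> negentropy t"
  using x_minus_1_le_x_ln_x[of "1 + t"] x_minus_1_le_x_ln_x[of "1 - t"]
  unfolding negentropy_def by linarith

lemma negentropy_0 [simp]: "negentropy 0 = 0"
  by (simp add: negentropy_def)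

lemma negentropy_abs [simp]: "negentropy \<bar>t\<bar> = negentropy t"
  by (simp add: negentropy_def abs_if)

lemma negentropy_has_real_derivative:
  assumes "-1 < t" "t < 1"
  shows "(negentropy has_real_derivative 2 * artanh t) (at t)"
proof -
  have "2 * artanh t = ln (1 + t) - ln (1 - t)"
    using assms by (simp add: artanh_def ln_div)
  then show ?thesis
    unfolding negentropy_def using assms
    by (auto intro!: derivative_eq_intros)
qed

lemma continuous_on_x_ln_x: "continuous_on {0..} (\<lambda>x::real. x * ln x)"
proof -
  have "((\<lambda>x::real. x * ln x) \<longlongrightarrow> 0) (at_right 0)"
    by real_asymp
  then have "((\<lambda>x::real. x * ln x) \<longlongrightarrow> 0) (at 0 within {0..})"
    by (simp add: at_within_Ici_at_right)
  moreover have "continuous (at x within {0..}) (\<lambda>x::real. x * ln x)" if "0 < x" for x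
    using that by (intro continuous_at_imp_continuous_at_within[where s="{0..}"])
        (auto intro!: continuous_intros)
  ultimately have "continuous (at x within {0..}) (\<lambda>x::real. x * ln x)" if "0 \<le> x" for x
    using that by (cases "x = 0") (auto simp: continuous_within)
  then show ?thesis
    by (simp add: continuous_on_eq_continuous_within)
qed

lemma continuous_on_negentropy: "continuous_on {-1..1} negentropy"
proof -
  have "continuous_on {-1..1} (\<lambda>t::real. (1 + t) * ln (1 + t))"
    by (rule continuous_on_compose2[OF continuous_on_x_ln_x]) (auto intro!: continuous_intros)
  moreover have "continuous_on {-1..1} (\<lambda>t::real. (1 - t) * ln (1 - t))"
    by (rule continuous_on_compose2[OF continuous_on_x_ln_x]) (auto intro!: continuous_intros)
  ultimately show ?thesis
    unfolding negentropy_def by (rule continuous_on_add)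
qed

lemma artanh_le:
  fixes t :: real
  assumes "0 \<le> t" "t < 1"
  shows "artanh t \<le> t / (1 - t\<^sup>2)"
proof -
  let ?K = "\<lambda>t::real. t / (1 - t\<^sup>2) - artanh t"
  have "?K 0 \<le> ?K t"
  proof (rule DERIV_nonneg_imp_increasing_open[OF assms(1)])
    fix x :: real
    assume x: "0 < x" "x < t"
    then have pos: "1 - x\<^sup>2 > 0"
      using assms by (simp add: abs_square_less_1)
    have "(?K has_real_derivative (1 + x\<^sup>2) / (1 - x\<^sup>2)\<^sup>2 - 1 / (1 - x\<^sup>2)) (at x)"
      using x assms pos
      by (auto intro!: derivative_eq_intros simp: power2_eq_square algebra_simps)
    moreover have "(1 + x\<^sup>2) / (1 - x\<^sup>2)\<^sup>2 - 1 / (1 - x\<^sup>2) = 2 * x\<^sup>2 / (1 - x\<^sup>2)\<^sup>2"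
      using pos by (simp add: divide_simps) (simp add: algebra_simps power2_eq_square)
    ultimately show "\<exists>y. (?K has_real_derivative y) (at x) \<and> 0 \<le> y"
      by auto
  next
    show "continuous_on {0..t} ?K"
      using assms by (intro continuous_intros) (auto simp: abs_square_eq_1)
  qed
  then show ?thesis
    by simp
qed

lemma artanh_div_mono:
  fixes s t :: real
  assumes "0 < s" "s \<le> t" "t < 1"
  shows "artanh s / s \<le> artanh t / t"
proof (rule DERIV_nonneg_imp_increasing_open[OF assms(2)])
  fix x :: real
  assume x: "s < x" "x < t"
  then have pos: "1 - x\<^sup>2 > 0"
    using assms by (simp add: abs_square_less_1)
  have "((\<lambda>x. artanh x / x) has_real_derivative (x / (1 - x\<^sup>2) - artanh x) / x\<^sup>2) (at x)"
    using x assms pos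
    by (auto intro!: derivative_eq_intros simp: power2_eq_square)
  moreover have "0 \<le> (x / (1 - x\<^sup>2) - artanh x) / x\<^sup>2"
    using artanh_le[of x] x assms by simp
  ultimately show "\<exists>y. ((\<lambda>x. artanh x / x) has_real_derivative y) (at x) \<and> 0 \<le> y"
    by blast
next
  show "continuous_on {s..t} (\<lambda>x. artanh x / x)"
    using assms by (intro continuous_intros) auto
qed

lemma negentropy_hypot_deriv_nonneg:
  fixes b x :: real
  assumes "0 < b" "0 < x" "x\<^sup>2 + b\<^sup>2 < 1"
  shows "\<exists>y. ((\<lambda>x. negentropy (sqrt (x\<^sup>2 + b\<^sup>2)) - negentropy x) has_real_derivative y) (at x) \<and> 0 \<le> y"
proof -
  define r where "r = sqrt (x\<^sup>2 + b\<^sup>2)"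
  have r1: "r < 1"
    using assms(3) by (simp add: r_def)
  have rx: "x < r"
    using assms(1) by (simp add: r_def real_less_rsqrt)
  have "0 < x\<^sup>2 + b\<^sup>2"
    using assms(1) by (simp add: add_nonneg_pos)
  then have dr: "((\<lambda>x. sqrt (x\<^sup>2 + b\<^sup>2)) has_real_derivative x / r) (at x)"
    by (auto intro!: derivative_eq_intros simp: r_def field_simps)
  have "x < 1"
    using rx r1 by linarith
  with dr assms(2) rx r1
  have "((\<lambda>x. negentropy (sqrt (x\<^sup>2 + b\<^sup>2)) - negentropy x) has_real_derivative
      2 * artanh r * (x / r) - 2 * artanh x) (at x)"
    unfolding r_def
    by (intro DERIV_diff DERIV_chain2[OF negentropy_has_real_derivative]
        negentropy_has_real_derivative) auto
  moreover have "x * (artanh x / x) \<le> x * (artanh r / r)"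
    using assms(2) rx r1 by (intro mult_left_mono artanh_div_mono) auto
  then have "artanh x \<le> artanh r * (x / r)"
    using assms(2) by (simp add: ac_simps)
  ultimately show ?thesis
    by (intro exI conjI) auto
qed

lemma negentropy_sqrt_superadditive:
  fixes a b :: real
  assumes "0 \<le> a" "0 \<le> b" "a\<^sup>2 + b\<^sup>2 \<le> 1"
  shows "negentropy a + negentropy b \<le> negentropy (sqrt (a\<^sup>2 + b\<^sup>2))"
proof (cases "b = 0")
  case False
  with assms have "b > 0" by simp
  let ?r = "\<lambda>x. sqrt (x\<^sup>2 + b\<^sup>2)"
  have r_range: "?r x \<in> {-1..1}" if "x \<in> {0..a}" for x
  proof -
    have "x\<^sup>2 \<le> a\<^sup>2"
      using that by (intro power_mono) auto
    with assms have "?r x \<le> 1"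
      by simp
    moreover have "0 \<le> ?r x"
      by simp
    ultimately show ?thesis
      unfolding atLeastAtMost_iff by linarith
  qed
  have "a \<le> ?r a"
    by (intro real_le_rsqrt) simp
  also have "\<dots> \<le> 1"
    using r_range[of a] assms by simp
  finally have "a \<le> 1" .
  have "negentropy (?r 0) - negentropy 0 \<le> negentropy (?r a) - negentropy a"
  proof (rule DERIV_nonneg_imp_increasing_open[OF assms(1)])
    fix x :: real
    assume "0 < x" "x < a"
    moreover from this have "x\<^sup>2 < a\<^sup>2"
      by (intro power_strict_mono) auto
    ultimately show "\<exists>y. ((\<lambda>x. negentropy (?r x) - negentropy x) has_real_derivative y) (at x) \<and> 0 \<le> y"
      using \<open>b > 0\<close> assms(3) by (intro negentropy_hypot_deriv_nonneg) auto
  next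
    show "continuous_on {0..a} (\<lambda>x. negentropy (?r x) - negentropy x)"
      using r_range \<open>a \<le> 1\<close>
      by (intro continuous_on_diff continuous_on_compose2[OF continuous_on_negentropy]
          continuous_on_subset[OF continuous_on_negentropy] continuous_intros) auto
  qed
  with assms show ?thesis
    by simp
qed (use assms in simp)

lemma negentropy_add_le:
  fixes a b R :: real
  assumes "a\<^sup>2 + b\<^sup>2 \<le> R\<^sup>2" "R\<^sup>2 \<le> 1"
  shows "negentropy a + negentropy b \<le> negentropy R"
proof -
  define s where "s = sqrt (a\<^sup>2 + b\<^sup>2)"
  define c where "c = sqrt (R\<^sup>2 - s\<^sup>2)"
  have "negentropy \<bar>a\<bar> + negentropy \<bar>b\<bar> \<le> negentropy s"
    using negentropy_sqrt_superadditive[of "\<bar>a\<bar>" "\<bar>b\<bar>"] order_trans[OF assms]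
    by (simp add: s_def)
  moreover have "negentropy s + negentropy c \<le> negentropy \<bar>R\<bar>"
    using negentropy_sqrt_superadditive[of s c] assms
    by (simp add: s_def c_def)
  moreover have "0 \<le> negentropy c"
  proof (intro negentropy_nonneg)
    have "s\<^sup>2 = a\<^sup>2 + b\<^sup>2" "0 \<le> a\<^sup>2 + b\<^sup>2"
      by (simp_all add: s_def)
    with assms have "0 \<le> R\<^sup>2 - s\<^sup>2" "R\<^sup>2 - s\<^sup>2 \<le> 1"
      by linarith+
    then show "\<bar>c\<bar> \<le> 1"
      by (simp add: c_def)
  qed
  ultimately show ?thesis
    by simp
qed

definition bias_entropy :: "real \<Rightarrow> real" where
  "bias_entropy t = - (xlogx ((1 + t) / 2) + xlogx ((1 - t) / 2))"

lemma bias_entropy_eq_negentropy: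
  assumes "\<bar>t\<bar> \<le> 1"
  shows "bias_entropy t = 1 - negentropy t / (2 * ln 2)"
proof -
  have half: "xlogx (p / 2) = (p * ln p - p * ln 2) / (2 * ln 2)" if "0 \<le> p" for p :: real
    using that by (cases "p = 0") (auto simp: xlogx_def log_def ln_div field_simps)
  show ?thesis
    using half[of "1 + t"] half[of "1 - t"] assms
    unfolding bias_entropy_def negentropy_def by (simp add: abs_le_iff field_simps)
qed

lemma bias_entropy_uncertainty:
  fixes a b R :: real
  assumes "a\<^sup>2 + b\<^sup>2 \<le> R\<^sup>2" "R\<^sup>2 \<le> 1"
  shows "1 + bias_entropy R \<le> bias_entropy a + bias_entropy b"
proof -
  have "a\<^sup>2 \<le> 1" "b\<^sup>2 \<le> 1"
    using assms zero_le_power2[of a] zero_le_power2[of b] by linarith+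
  with assms have "\<bar>a\<bar> \<le> 1" "\<bar>b\<bar> \<le> 1" "\<bar>R\<bar> \<le> 1"
    by (simp_all add: abs_square_le_1)
  moreover have "negentropy a / (2 * ln 2) + negentropy b / (2 * ln 2) \<le> negentropy R / (2 * ln 2)"
    using negentropy_add_le[OF assms] by (simp add: add_divide_distrib[symmetric] divide_right_mono)
  ultimately show ?thesis
    by (simp add: bias_entropy_eq_negentropy)
qed

section \<open>Eigenvalues and von Neumann entropy\<close>

lemma order_linear_factors:
  fixes as :: "'a::idom list"
  shows "order x (\<Prod>a\<leftarrow>as. [:- a, 1:]) = count (mset as) x"
proof (induction as)
  case (Cons a as)
  have "(\<Prod>a\<leftarrow>as. [:- a, 1:]) \<noteq> 0"
    by (auto simp: prod_list_zero_iff)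
  then have "order x ([:- a, 1:] * (\<Prod>a\<leftarrow>as. [:- a, 1:]))
      = order x [:- a, 1:] + order x (\<Prod>a\<leftarrow>as. [:- a, 1:])"
    by (intro order_mult) (metis mult_eq_0_iff pCons_eq_0_iff one_neq_zero)
  with Cons.IH show ?case
    by (simp add: order_linear')
qed (simp add: order_1_eq_0)

lemma linear_factors_eq_imp_mset_eq:
  fixes as bs :: "'a::idom list"
  assumes "(\<Prod>a\<leftarrow>as. [:- a, 1:]) = (\<Prod>a\<leftarrow>bs. [:- a, 1:])"
  shows "mset as = mset bs"
  by (rule multiset_eqI) (metis assms order_linear_factors)

lemma vn_entropy_linear_factors:
  assumes "char_poly A = (\<Prod>a\<leftarrow>es. [:- a, 1:])" "length es = dim_row A"
  shows "vn_entropy A = - (\<Sum>e\<leftarrow>es. xlogx (Re e))"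
proof -
  let ?P = "\<lambda>es. char_poly A = (\<Prod>a\<leftarrow>es. [:- a, 1:]) \<and> length es = dim_row A"
  have "?P (SOME es. ?P es)"
    using assms by (intro someI[of ?P]) simp
  with assms have "mset (SOME es. ?P es) = mset es"
    by (intro linear_factors_eq_imp_mset_eq) simp
  then have "(\<Sum>e\<leftarrow>(SOME es. ?P es). xlogx (Re e)) = (\<Sum>e\<leftarrow>es. xlogx (Re e))"
    by (simp flip: sum_mset_sum_list)
  then show ?thesis
    by (simp add: vn_entropy_def)
qed

lemma det_2:
  fixes A :: "'a::comm_ring_1 mat"
  assumes "A \<in> carrier_mat 2 2"
  shows "det A = A $$ (0, 0) * A $$ (1, 1) - A $$ (0, 1) * A $$ (1, 0)"
proof -
  have "det A = (\<Sum>j<2. A $$ (0, j) * cofactor A 0 j)"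
    by (rule laplace_expansion_row[OF assms]) simp
  also have "\<dots> = A $$ (0, 0) * A $$ (1, 1) - A $$ (0, 1) * A $$ (1, 0)"
    using assms
    by (simp add: cofactor_def numeral_2_eq_2 det_single mat_delete_carrier mat_delete_def)
  finally show ?thesis .
qed

lemma char_poly_2:
  fixes A :: "'a::comm_ring_1 mat"
  assumes "A \<in> carrier_mat 2 2"
  shows "char_poly A = [:det A, - (A $$ (0, 0) + A $$ (1, 1)), 1:]"
proof -
  have "char_poly_matrix A \<in> carrier_mat 2 2"
    using assms by simp
  then show ?thesis
    using assms unfolding char_poly_def det_2[OF assms] by (subst det_2)
      (simp_all add: char_poly_matrix_def numeral_2_eq_2 algebra_simps)
qed

section \<open>Bloch vectors of a qubit\<close>

lemma sq_inner_add_le_norm: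
  fixes r n m :: "'a::real_inner"
  assumes "norm n = 1" "norm m = 1" "inner n m = 0"
  shows "(inner r n)\<^sup>2 + (inner r m)\<^sup>2 \<le> (norm r)\<^sup>2"
proof -
  let ?v = "r - inner r n *\<^sub>R n - inner r m *\<^sub>R m"
  have "inner n n = 1" "inner m m = 1"
    using assms by (simp_all add: norm_eq_1)
  then have "inner ?v ?v = inner r r - (inner r n)\<^sup>2 - (inner r m)\<^sup>2"
    using assms(3)
    by (simp add: inner_diff_left inner_diff_right inner_commute power2_eq_square algebra_simps)
  with inner_ge_zero[of ?v] show ?thesis
    by (simp add: power2_norm_eq_inner)
qed

lemma eq_neg_if_inner_eq_neg_1:
  fixes x y :: "'a::real_inner"
  assumes "inner x x = 1" "inner y y = 1" "inner x y = -1"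
  shows "y = - x"
proof -
  have "inner (x + y) (x + y) = 0"
    using assms by (simp add: inner_add_left inner_add_right inner_commute)
  then have "x + y = 0"
    by simp
  then show ?thesis
    by (metis neg_eq_iff_add_eq_0)
qed

lemma sum_lessThan_2: "(\<Sum>i<2. f i) = f 0 + f (1::nat)"
  by (simp add: numeral_2_eq_2)

lemma cinner_2: "u \<in> carrier_vec 2 \<Longrightarrow> cinner u v = cnj (u $ 0) * v $ 0 + cnj (u $ 1) * v $ 1"
  by (simp add: cinner_def sum_lessThan_2)

lemma cinner_mult_mat_vec_2:
  assumes "A \<in> carrier_mat 2 2" "v \<in> carrier_vec 2"
  shows "cinner v (A *\<^sub>v v) = cnj (v $ 0) * (A $$ (0, 0) * v $ 0 + A $$ (0, 1) * v $ 1)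
    + cnj (v $ 1) * (A $$ (1, 0) * v $ 0 + A $$ (1, 1) * v $ 1)"
  using assms
  by (simp add: cinner_2 mult_mat_vec_def scalar_prod_def atLeast0LessThan sum_lessThan_2)

text \<open>A Hermitian \<open>A\<close> of trace 1 is \<open>(1 + r\<^sub>1 \<sigma>\<^sub>z + r\<^sub>2 \<sigma>\<^sub>x + r\<^sub>3 \<sigma>\<^sub>y) / 2\<close> with the Pauli
  matrices \<open>\<sigma>\<close> and \<open>r = bloch_mat A\<close>; \<open>bloch_vec u\<close> is the Bloch vector of the projector \<open>u u\<^sup>*\<close>.\<close>

definition bloch_vec :: "complex vec \<Rightarrow> real \<times> real \<times> real" where
  "bloch_vec u = ((cmod (u $ 0))\<^sup>2 - (cmod (u $ 1))\<^sup>2,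
     2 * Re (cnj (u $ 0) * u $ 1), 2 * Im (cnj (u $ 0) * u $ 1))"

definition bloch_mat :: "complex mat \<Rightarrow> real \<times> real \<times> real" where
  "bloch_mat A = (Re (A $$ (0, 0)) - Re (A $$ (1, 1)), 2 * Re (A $$ (0, 1)), - 2 * Im (A $$ (0, 1)))"

lemma inner_bloch_vec:
  assumes "u \<in> carrier_vec 2" "v \<in> carrier_vec 2"
  shows "inner (bloch_vec u) (bloch_vec v)
    = 2 * (cmod (cinner u v))\<^sup>2 - Re (cinner u u) * Re (cinner v v)"
  using assms unfolding bloch_vec_def cinner_2[OF assms(1)] cinner_2[OF assms(2)] cmod_power2
  by (simp add: power2_eq_square algebra_simps)

lemma inner_bloch_vec_self:
  assumes "u \<in> carrier_vec 2" "cinner u u = 1"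
  shows "inner (bloch_vec u) (bloch_vec u) = 1"
  using inner_bloch_vec[OF assms(1,1)] assms(2) by simp

lemma bloch_vec_orthonormal_basis2:
  assumes "orthonormal_basis2 y"
  shows "bloch_vec (y 1) = - bloch_vec (y 0)"
proof (rule eq_neg_if_inner_eq_neg_1)
  have y: "y 0 \<in> carrier_vec 2" "y 1 \<in> carrier_vec 2" "cinner (y 0) (y 0) = 1"
      "cinner (y 1) (y 1) = 1" "cinner (y 0) (y 1) = 0"
    using assms unfolding orthonormal_basis2_def by auto
  then show "inner (bloch_vec (y 0)) (bloch_vec (y 0)) = 1" "inner (bloch_vec (y 1)) (bloch_vec (y 1)) = 1"
    by (simp_all add: inner_bloch_vec_self)
  show "inner (bloch_vec (y 0)) (bloch_vec (y 1)) = -1"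
    using y by (simp add: inner_bloch_vec)
qed

lemma mutually_unbiased2_bloch_orthogonal:
  assumes "orthonormal_basis2 z" "orthonormal_basis2 x" "mutually_unbiased2 z x"
  shows "inner (bloch_vec (z 0)) (bloch_vec (x 0)) = 0"
proof -
  have "z 0 \<in> carrier_vec 2" "x 0 \<in> carrier_vec 2" "cinner (z 0) (z 0) = 1" "cinner (x 0) (x 0) = 1"
      "(cmod (cinner (z 0) (x 0)))\<^sup>2 = 1 / 2"
    using assms unfolding orthonormal_basis2_def mutually_unbiased2_def by auto
  then show ?thesis
    by (simp add: inner_bloch_vec)
qed

lemma hermitian_entry:
  assumes "A \<in> carrier_mat n n" "hermitian A" "i < n" "j < n"
  shows "A $$ (i, j) = cnj (A $$ (j, i))"
  using assms(2-4) unfolding hermitian_def carrier_matD(1)[OF assms(1)] by blast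

lemma density_matrix_2E:
  assumes "density_matrix 2 A"
  obtains p w where "A \<in> carrier_mat 2 2" "A $$ (0, 0) = of_real p" "A $$ (1, 1) = of_real (1 - p)"
    "A $$ (0, 1) = w" "A $$ (1, 0) = cnj w"
proof -
  have A: "A \<in> carrier_mat 2 2" "hermitian A" "A $$ (0, 0) + A $$ (1, 1) = 1"
    using assms unfolding density_matrix_def by (auto simp: sum_lessThan_2)
  have "Im (A $$ (i, i)) = 0" if "i < 2" for i
    using arg_cong[OF hermitian_entry[OF A(1,2) that that], of Im] by simp
  then have "A $$ (0, 0) = of_real (Re (A $$ (0, 0)))" "A $$ (1, 1) = of_real (1 - Re (A $$ (0, 0)))"
    using A(3) by (auto simp: complex_eq_iff)
  moreover have "A $$ (1, 0) = cnj (A $$ (0, 1))"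
    using hermitian_entry[OF A(1,2), of 1 0] by simp
  ultimately show ?thesis
    using A(1) by (intro that) auto
qed

lemma cmod_power2_sum_eq_1:
  assumes "u \<in> carrier_vec 2" "cinner u u = 1"
  shows "(cmod (u $ 0))\<^sup>2 + (cmod (u $ 1))\<^sup>2 = 1"
  using arg_cong[OF assms(2), of Re] unfolding cinner_2[OF assms(1)] cmod_power2
  by (simp add: power2_eq_square)

lemma cinner_density_matrix_2_bloch:
  assumes "density_matrix 2 A" "u \<in> carrier_vec 2" "cinner u u = 1"
  shows "Re (cinner u (A *\<^sub>v u)) = (1 + inner (bloch_mat A) (bloch_vec u)) / 2"
proof -
  obtain p w where A: "A \<in> carrier_mat 2 2" "A $$ (0, 0) = of_real p" "A $$ (1, 1) = of_real (1 - p)"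
    "A $$ (0, 1) = w" "A $$ (1, 0) = cnj w"
    using assms(1) by (rule density_matrix_2E)
  show ?thesis
    using cmod_power2_sum_eq_1[OF assms(2,3)]
    unfolding cinner_mult_mat_vec_2[OF A(1) assms(2)] bloch_mat_def bloch_vec_def A(2-5) cmod_power2
    by (simp add: power2_eq_square algebra_simps)
qed

lemma inner_bloch_mat_le_1:
  assumes "density_matrix 2 A"
  shows "inner (bloch_mat A) (bloch_mat A) \<le> 1"
proof -
  obtain p w where A: "A \<in> carrier_mat 2 2" "A $$ (0, 0) = of_real p" "A $$ (1, 1) = of_real (1 - p)"
    "A $$ (0, 1) = w" "A $$ (1, 0) = cnj w"
    using assms by (rule density_matrix_2E)
  define D where "D = p * (1 - p) - (cmod w)\<^sup>2"
  have Q: "0 \<le> p * (cmod a)\<^sup>2 + (1 - p) * (cmod b)\<^sup>2 + 2 * Re (w * cnj a * b)" for a b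
  proof -
    let ?v = "vec 2 (\<lambda>i. if i = 0 then a else b)"
    have "0 \<le> Re (cinner ?v (A *\<^sub>v ?v))"
      using assms A(1) unfolding density_matrix_def positive_semidef_def by auto
    then show ?thesis
      unfolding cinner_mult_mat_vec_2[OF A(1) vec_carrier] A(2-5) cmod_power2
      by (simp add: power2_eq_square algebra_simps)
  qed
  \<comment> \<open>Test with the columns \<open>c\<close> of the adjugate: \<open>A c = det A \<cdot> e\<^sub>j\<close>, so \<open>\<langle>c, A c\<rangle> = det A \<cdot> c\<^sub>j\<close>.\<close>
  have "0 \<le> (1 - p) * D"
    using Q[of "of_real (1 - p)" "- cnj w"] unfolding D_def cmod_power2
    by (simp add: power2_eq_square algebra_simps)
  moreover have "0 \<le> p * D"
    using Q[of "- w" "of_real p"] unfolding D_def cmod_power2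
    by (simp add: power2_eq_square algebra_simps)
  ultimately have "0 \<le> D"
    by (simp add: algebra_simps)
  moreover have "inner (bloch_mat A) (bloch_mat A) = 1 - 4 * D"
    unfolding bloch_mat_def A(2-5) D_def cmod_power2 by (simp add: power2_eq_square algebra_simps)
  ultimately show ?thesis
    by simp
qed

lemma det_density_matrix_2:
  assumes "density_matrix 2 A"
  shows "det A = of_real ((1 - (norm (bloch_mat A))\<^sup>2) / 4)"
proof -
  obtain p w where A: "A \<in> carrier_mat 2 2" "A $$ (0, 0) = of_real p" "A $$ (1, 1) = of_real (1 - p)"
    "A $$ (0, 1) = w" "A $$ (1, 0) = cnj w"
    using assms by (rule density_matrix_2E)
  show ?thesis
    unfolding det_2[OF A(1)] A(2-5) power2_norm_eq_inner bloch_mat_def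
    by (simp add: complex_eq_iff power2_eq_square algebra_simps)
qed

lemma vn_entropy_density_matrix_2:
  assumes "density_matrix 2 A"
  shows "vn_entropy A = bias_entropy (norm (bloch_mat A))"
proof -
  define R where "R = norm (bloch_mat A)"
  have A: "A \<in> carrier_mat 2 2" "A $$ (0, 0) + A $$ (1, 1) = 1"
    using assms unfolding density_matrix_def by (auto simp: sum_lessThan_2)
  have "char_poly A = (\<Prod>a\<leftarrow>[of_real ((1 + R) / 2), of_real ((1 - R) / 2)]. [:- a, 1:])"
    unfolding char_poly_2[OF A(1)] det_density_matrix_2[OF assms] A(2) R_def[symmetric]
    by (simp add: power2_eq_square field_simps)
  from vn_entropy_linear_factors[OF this] A(1) show ?thesis
    by (simp add: bias_entropy_def R_def)
qed

definition meas_entropy :: "(nat \<Rightarrow> complex vec) \<Rightarrow> complex mat \<Rightarrow> real" where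
  "meas_entropy y A = - (\<Sum>j<2. xlogx (Re (cinner (y j) (A *\<^sub>v y j))))"

lemma meas_entropy_bloch:
  assumes "density_matrix 2 A" "orthonormal_basis2 y"
  shows "meas_entropy y A = bias_entropy (inner (bloch_mat A) (bloch_vec (y 0)))"
proof -
  let ?t = "inner (bloch_mat A) (bloch_vec (y 0))"
  have "y 0 \<in> carrier_vec 2" "cinner (y 0) (y 0) = 1" "y 1 \<in> carrier_vec 2" "cinner (y 1) (y 1) = 1"
    using assms(2) unfolding orthonormal_basis2_def by auto
  then have probs: "Re (cinner (y 0) (A *\<^sub>v y 0)) = (1 + ?t) / 2" "Re (cinner (y 1) (A *\<^sub>v y 1)) = (1 - ?t) / 2"
    using bloch_vec_orthonormal_basis2[OF assms(2)]
    by (simp_all add: cinner_density_matrix_2_bloch[OF assms(1)] inner_minus_right)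
  show ?thesis
    unfolding meas_entropy_def bias_entropy_def sum_lessThan_2 probs by simp
qed

theorem qubit_entropic_uncertainty:
  assumes "density_matrix 2 A" "orthonormal_basis2 z" "orthonormal_basis2 x" "mutually_unbiased2 z x"
  shows "1 + vn_entropy A \<le> meas_entropy z A + meas_entropy x A"
proof -
  let ?r = "bloch_mat A"
  have "norm (bloch_vec (z 0)) = 1" "norm (bloch_vec (x 0)) = 1"
    using assms(2,3) unfolding orthonormal_basis2_def
    by (simp_all add: norm_eq_1 inner_bloch_vec_self)
  then have "(inner ?r (bloch_vec (z 0)))\<^sup>2 + (inner ?r (bloch_vec (x 0)))\<^sup>2 \<le> (norm ?r)\<^sup>2"
    using mutually_unbiased2_bloch_orthogonal[OF assms(2-4)] by (rule sq_inner_add_le_norm)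
  moreover have "(norm ?r)\<^sup>2 \<le> 1"
    using inner_bloch_mat_le_1[OF assms(1)] by (simp add: power2_norm_eq_inner)
  ultimately show ?thesis
    unfolding vn_entropy_density_matrix_2[OF assms(1)] meas_entropy_bloch[OF assms(1,2)]
      meas_entropy_bloch[OF assms(1,3)]
    by (rule bias_entropy_uncertainty)
qed

section \<open>Local measurements and partial traces\<close>

lemma orthonormal_basis2_complete:
  assumes "orthonormal_basis2 y" "m < 2" "m' < 2"
  shows "(\<Sum>k<2. cnj (y k $ m) * y k $ m') = (if m = m' then 1 else 0)"
proof -
  define U where "U = mat 2 2 (\<lambda>(i, k). y k $ i)"
  define V where "V = mat 2 2 (\<lambda>(k, i). cnj (y k $ i))"
  have U: "U \<in> carrier_mat 2 2" and V: "V \<in> carrier_mat 2 2"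
    unfolding U_def V_def by auto
  have dim: "dim_vec (y k) = 2" if "k < 2" for k
    using assms(1) that unfolding orthonormal_basis2_def by auto
  have "V * U = 1\<^sub>m 2"
  proof (rule eq_matI)
    fix k l
    assume "k < dim_row (1\<^sub>m 2)" "l < dim_col (1\<^sub>m (2::nat))"
    then have kl: "k < 2" "l < 2"
      by auto
    then have "(V * U) $$ (k, l) = cinner (y k) (y l)"
      unfolding U_def V_def cinner_def using dim
      by (simp add: scalar_prod_def atLeast0LessThan row_def col_def)
    also have "\<dots> = 1\<^sub>m 2 $$ (k, l)"
      using assms(1) kl unfolding orthonormal_basis2_def by simp
    finally show "(V * U) $$ (k, l) = 1\<^sub>m 2 $$ (k, l)" .
  qed (auto simp: U_def V_def)
  then have "U * V = 1\<^sub>m 2"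
    by (rule mat_mult_left_right_inverse[OF V U])
  moreover have "(U * V) $$ (m', m) = (\<Sum>k<2. y k $ m' * cnj (y k $ m))"
    using assms(2,3) unfolding U_def V_def
    by (simp add: scalar_prod_def atLeast0LessThan row_def col_def)
  ultimately show ?thesis
    using assms(2,3) by (auto simp: mult.commute)
qed

lemma orthonormal_basis2_unit_vec: "orthonormal_basis2 (unit_vec 2)"
  unfolding orthonormal_basis2_def cinner_def by (auto simp: sum_lessThan_2 unit_vec_def)

lemma sum_lessThan_4: "(\<Sum>i<4. f i) = f 0 + f 1 + f 2 + f (3::nat)"
  by (simp add: numeral_eq_Suc)

lemma sum_lessThan_4_pairs: "(\<Sum>n<4. f n) = (\<Sum>i<2. \<Sum>a<2. f (2 * i + a :: nat))"
  by (simp add: sum_lessThan_2 sum_lessThan_4 add.assoc)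

lemma kron_vec_carrier_2: "u \<in> carrier_vec 2 \<Longrightarrow> v \<in> carrier_vec 2 \<Longrightarrow> kron_vec u v \<in> carrier_vec 4"
  by (simp add: kron_vec_def)

lemma kron_vec_2_index:
  assumes "f \<in> carrier_vec 2" "g \<in> carrier_vec 2" "i < 2" "a < 2"
  shows "kron_vec f g $ (2 * i + a) = f $ i * g $ a"
  using assms by (simp add: kron_vec_def)

lemma cinner_kron_vec:
  assumes "f \<in> carrier_vec 2" "g \<in> carrier_vec 2" "A \<in> carrier_mat 4 4"
  shows "cinner (kron_vec f g) (A *\<^sub>v kron_vec f g) = (\<Sum>i<2. \<Sum>a<2. \<Sum>j<2. \<Sum>b<2.
    cnj (f $ i) * cnj (g $ a) * A $$ (2 * i + a, 2 * j + b) * f $ j * g $ b)"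
proof -
  have "cinner (kron_vec f g) (A *\<^sub>v kron_vec f g)
      = (\<Sum>n<4. cnj (kron_vec f g $ n) * (\<Sum>m<4. A $$ (n, m) * kron_vec f g $ m))"
    using assms by (simp add: cinner_def kron_vec_def mult_mat_vec_def scalar_prod_def atLeast0LessThan)
  also have "\<dots> = (\<Sum>i<2. \<Sum>a<2. cnj (f $ i * g $ a) *
      (\<Sum>j<2. \<Sum>b<2. A $$ (2 * i + a, 2 * j + b) * (f $ j * g $ b)))"
    unfolding sum_lessThan_4_pairs using assms(1,2) by (simp add: kron_vec_2_index)
  also have "\<dots> = (\<Sum>i<2. \<Sum>a<2. \<Sum>j<2. \<Sum>b<2.
      cnj (f $ i) * cnj (g $ a) * A $$ (2 * i + a, 2 * j + b) * f $ j * g $ b)"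
    by (simp add: sum_distrib_left algebra_simps)
  finally show ?thesis .
qed

lemma sum_cinner_kron_vec_right:
  assumes "orthonormal_basis2 g" "f \<in> carrier_vec 2" "A \<in> carrier_mat 4 4"
  shows "(\<Sum>k<2. cinner (kron_vec f (g k)) (A *\<^sub>v kron_vec f (g k))) = cinner f (ptrace_B A *\<^sub>v f)"
proof -
  have g: "g k \<in> carrier_vec 2" if "k < 2" for k
    using assms(1) that unfolding orthonormal_basis2_def by auto
  have "(\<Sum>k<2. cinner (kron_vec f (g k)) (A *\<^sub>v kron_vec f (g k))) = (\<Sum>i<2. \<Sum>a<2. \<Sum>j<2. \<Sum>b<2.
      cnj (f $ i) * A $$ (2 * i + a, 2 * j + b) * f $ j * (\<Sum>k<2. cnj (g k $ a) * g k $ b))"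
    using g by (simp add: cinner_kron_vec[OF assms(2) _ assms(3)] sum_lessThan_2 algebra_simps)
  also have "\<dots> = (\<Sum>i<2. \<Sum>a<2. \<Sum>j<2. cnj (f $ i) * A $$ (2 * i + a, 2 * j + a) * f $ j)"
    by (simp add: orthonormal_basis2_complete[OF assms(1)]) (simp add: sum_lessThan_2 numeral_eq_Suc)
  also have "\<dots> = cinner f (ptrace_B A *\<^sub>v f)"
    using assms(2)
    by (simp add: cinner_def ptrace_B_def mult_mat_vec_def scalar_prod_def atLeast0LessThan
        sum_lessThan_2 algebra_simps)
  finally show ?thesis .
qed

lemma sum_cinner_kron_vec_left:
  assumes "orthonormal_basis2 g" "f \<in> carrier_vec 2" "A \<in> carrier_mat 4 4"
  shows "(\<Sum>k<2. cinner (kron_vec (g k) f) (A *\<^sub>v kron_vec (g k) f)) = cinner f (ptrace_A A *\<^sub>v f)"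
proof -
  have g: "g k \<in> carrier_vec 2" if "k < 2" for k
    using assms(1) that unfolding orthonormal_basis2_def by auto
  have "(\<Sum>k<2. cinner (kron_vec (g k) f) (A *\<^sub>v kron_vec (g k) f)) = (\<Sum>i<2. \<Sum>a<2. \<Sum>j<2. \<Sum>b<2.
      cnj (f $ i) * A $$ (2 * a + i, 2 * b + j) * f $ j * (\<Sum>k<2. cnj (g k $ a) * g k $ b))"
    using g by (simp add: cinner_kron_vec[OF _ assms(2) assms(3)] sum_lessThan_2 algebra_simps)
  also have "\<dots> = (\<Sum>i<2. \<Sum>a<2. \<Sum>j<2. cnj (f $ i) * A $$ (2 * a + i, 2 * a + j) * f $ j)"
    by (simp add: orthonormal_basis2_complete[OF assms(1)]) (simp add: sum_lessThan_2 numeral_eq_Suc)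
  also have "\<dots> = cinner f (ptrace_A A *\<^sub>v f)"
    using assms(2)
    by (simp add: cinner_def ptrace_A_def mult_mat_vec_def scalar_prod_def atLeast0LessThan
        sum_lessThan_2 algebra_simps)
  finally show ?thesis .
qed

lemma density_matrix_ptrace_B:
  assumes "two_qubit_state \<rho>"
  shows "density_matrix 2 (ptrace_B \<rho>)"
proof -
  have \<rho>: "\<rho> \<in> carrier_mat 4 4" "hermitian \<rho>" "positive_semidef \<rho>" "(\<Sum>i<4. \<rho> $$ (i, i)) = 1"
    using assms unfolding two_qubit_state_def density_matrix_def by auto
  have "hermitian (ptrace_B \<rho>)"
    unfolding hermitian_def
  proof (intro allI impI)
    fix i j
    assume "i < dim_row (ptrace_B \<rho>)" "j < dim_row (ptrace_B \<rho>)"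
    then have "i < 2" "j < 2"
      by (simp_all add: ptrace_B_def)
    then show "ptrace_B \<rho> $$ (i, j) = cnj (ptrace_B \<rho> $$ (j, i))"
      using hermitian_entry[OF \<rho>(1,2), of "2 * i" "2 * j"] hermitian_entry[OF \<rho>(1,2), of "2 * i + 1" "2 * j + 1"]
      by (simp add: ptrace_B_def sum_lessThan_2)
  qed
  moreover have "positive_semidef (ptrace_B \<rho>)"
    unfolding positive_semidef_def
  proof
    fix v :: "complex vec"
    assume "v \<in> carrier_vec (dim_row (ptrace_B \<rho>))"
    then have v: "v \<in> carrier_vec 2"
      by (simp add: ptrace_B_def)
    have "0 \<le> Re (cinner (kron_vec v (unit_vec 2 k)) (\<rho> *\<^sub>v kron_vec v (unit_vec 2 k)))" for k
      using \<rho>(3) kron_vec_carrier_2[OF v unit_vec_carrier] \<rho>(1)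
      unfolding positive_semidef_def by simp
    then show "0 \<le> Re (cinner v (ptrace_B \<rho> *\<^sub>v v))"
      unfolding sum_cinner_kron_vec_right[OF orthonormal_basis2_unit_vec v \<rho>(1), symmetric]
      by (simp add: Re_sum sum_nonneg)
  qed
  moreover have "(\<Sum>i<2. ptrace_B \<rho> $$ (i, i)) = 1"
    using \<rho>(4) by (simp add: ptrace_B_def sum_lessThan_2 sum_lessThan_4 add.assoc)
  ultimately show ?thesis
    unfolding density_matrix_def by (simp add: ptrace_B_def)
qed

lemma density_matrix_ptrace_A:
  assumes "two_qubit_state \<rho>"
  shows "density_matrix 2 (ptrace_A \<rho>)"
proof -
  have \<rho>: "\<rho> \<in> carrier_mat 4 4" "hermitian \<rho>" "positive_semidef \<rho>" "(\<Sum>i<4. \<rho> $$ (i, i)) = 1"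
    using assms unfolding two_qubit_state_def density_matrix_def by auto
  have "hermitian (ptrace_A \<rho>)"
    unfolding hermitian_def
  proof (intro allI impI)
    fix i j
    assume "i < dim_row (ptrace_A \<rho>)" "j < dim_row (ptrace_A \<rho>)"
    then have "i < 2" "j < 2"
      by (simp_all add: ptrace_A_def)
    then show "ptrace_A \<rho> $$ (i, j) = cnj (ptrace_A \<rho> $$ (j, i))"
      using hermitian_entry[OF \<rho>(1,2), of i j] hermitian_entry[OF \<rho>(1,2), of "2 + i" "2 + j"]
      by (simp add: ptrace_A_def sum_lessThan_2)
  qed
  moreover have "positive_semidef (ptrace_A \<rho>)"
    unfolding positive_semidef_def
  proof
    fix v :: "complex vec"
    assume "v \<in> carrier_vec (dim_row (ptrace_A \<rho>))"
    then have v: "v \<in> carrier_vec 2"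
      by (simp add: ptrace_A_def)
    have "0 \<le> Re (cinner (kron_vec (unit_vec 2 k) v) (\<rho> *\<^sub>v kron_vec (unit_vec 2 k) v))" for k
      using \<rho>(3) kron_vec_carrier_2[OF unit_vec_carrier v] \<rho>(1)
      unfolding positive_semidef_def by simp
    then show "0 \<le> Re (cinner v (ptrace_A \<rho> *\<^sub>v v))"
      unfolding sum_cinner_kron_vec_left[OF orthonormal_basis2_unit_vec v \<rho>(1), symmetric]
      by (simp add: Re_sum sum_nonneg)
  qed
  moreover have "(\<Sum>i<2. ptrace_A \<rho> $$ (i, i)) = 1"
    using \<rho>(4) by (simp add: ptrace_A_def sum_lessThan_2 sum_lessThan_4 numeral_eq_Suc add_ac)
  ultimately show ?thesis
    unfolding density_matrix_def by (simp add: ptrace_A_def)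
qed

lemma shannon_A_eq_meas_entropy:
  assumes "orthonormal_basis2 z" "\<rho> \<in> carrier_mat 4 4"
  shows "shannon_A z \<rho> = meas_entropy z (ptrace_B \<rho>)"
proof -
  have "(\<Sum>k<2. meas_prob z \<rho> j k) = Re (cinner (z j) (ptrace_B \<rho> *\<^sub>v z j))" if "j < 2" for j
    using assms that unfolding orthonormal_basis2_def meas_prob_def
    by (simp add: Re_sum[symmetric] sum_cinner_kron_vec_right assms)
  then show ?thesis
    unfolding shannon_A_def meas_entropy_def by simp
qed

lemma shannon_B_eq_meas_entropy:
  assumes "orthonormal_basis2 z" "\<rho> \<in> carrier_mat 4 4"
  shows "shannon_B z \<rho> = meas_entropy z (ptrace_A \<rho>)"
proof -
  have "(\<Sum>j<2. meas_prob z \<rho> j k) = Re (cinner (z k) (ptrace_A \<rho> *\<^sub>v z k))" if "k < 2" for k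
    using assms that unfolding orthonormal_basis2_def meas_prob_def
    by (simp add: Re_sum[symmetric] sum_cinner_kron_vec_left assms)
  then show ?thesis
    unfolding shannon_B_def meas_entropy_def by simp
qed

theorem proposition1:
  fixes z x :: "nat \<Rightarrow> complex vec" and \<rho> :: "complex mat"
  assumes "orthonormal_basis2 z" and "orthonormal_basis2 x"
    and "mutually_unbiased2 z x"
    and CQC: "\<forall>\<sigma>. two_qubit_state \<sigma> \<longrightarrow> cmutual_info z \<sigma> + cmutual_info x \<sigma> \<le> qmutual_info \<sigma>"
    and "two_qubit_state \<rho>"
  shows "joint_shannon z \<rho> + joint_shannon x \<rho> \<ge> 2 + vn_entropy \<rho>"
proof -
  have \<rho>: "\<rho> \<in> carrier_mat 4 4"
    using assms(5) unfolding two_qubit_state_def density_matrix_def by simp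
  have "1 + vn_entropy (ptrace_B \<rho>) \<le> shannon_A z \<rho> + shannon_A x \<rho>"
    unfolding shannon_A_eq_meas_entropy[OF assms(1) \<rho>] shannon_A_eq_meas_entropy[OF assms(2) \<rho>]
    by (rule qubit_entropic_uncertainty[OF density_matrix_ptrace_B[OF assms(5)] assms(1-3)])
  moreover have "1 + vn_entropy (ptrace_A \<rho>) \<le> shannon_B z \<rho> + shannon_B x \<rho>"
    unfolding shannon_B_eq_meas_entropy[OF assms(1) \<rho>] shannon_B_eq_meas_entropy[OF assms(2) \<rho>]
    by (rule qubit_entropic_uncertainty[OF density_matrix_ptrace_A[OF assms(5)] assms(1-3)])
  moreover have "cmutual_info z \<rho> + cmutual_info x \<rho> \<le> qmutual_info \<rho>"
    using CQC assms(5) by blast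
  ultimately show ?thesis
    unfolding cmutual_info_def qmutual_info_def by linarith
qed

end
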